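(* Let $d\geqslant 2$ and let $V=\{x\in\mathbb{Z}^d:\gcd(x_1,\ldots,x_d)=1\}$ be the set of visible points of $\mathbb{Z}^d$. For every $y\in\mathbb{R}^d$, the Fourier--Bohr coefficient \[ a_V(y)=\lim_{r\to\infty}\frac{1}{\mathrm{vol}(B_r(0))}\sum_{x\in V\cap B_r(0)} e^{-2\pi i\, x\cdot y} \] exists, and \[ a_V(y)=\begin{cases}\dfrac{1}{\zeta(d)}\displaystyle\prod_{p\mid \mathrm{den}(y)}\frac{1}{1-p^d}, & \text{if } y\in L^{\circledast},\\[2mm] 0, & \text{otherwise},\end{cases} \] where $L^{\circledast}=\{q\in\mathbb{Q}^d:\mathrm{den}(q)\text{ is square-free}\}=\sum_{p\in\mathcal{P}}p^{-1}\mathbb{Z}^d$ (sums with finitely many non-zero terms), $\zeta$ is the Riemann zeta function and the product runs over rational primes $p$ dividing $\mathrm{den}(y)$. In particular $a_V(0)=\mathrm{dens}(V)=1/\zeta(d)$.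
   Context: $\mathcal{P}$ denotes the set of rational primes; $B_r(0)$ is the closed Euclidean ball of radius $r$ centred at $0$; $x\cdot y$ is the standard inner product. For $k\in\mathbb{Q}^d$, the denominator $\mathrm{den}(k)$ is the unique $q\in\mathbb{N}$ such that $k=(k_1,\ldots,k_d)/q$ with all $k_i\in\mathbb{Z}$ and $\gcd(k_1,\ldots,k_d,q)=1$; in particular $\mathrm{den}(0)=1$. The density $\mathrm{dens}(V)$ is the natural density $\lim_{r\to\infty}\mathrm{card}(V\cap B_r(0))/\mathrm{vol}(B_r(0))$. *)

theory Defs
  imports "HOL-Analysis.Analysis" "HOL-Computational_Algebra.Squarefree"
begin

definition visible_points :: "(real ^ 'n) set" where
  "visible_points = {x. (\<forall>i. x $ i \<in> \<int>) \<and> Gcd (range (\<lambda>i. \<lfloor>x $ i\<rfloor>)) = (1::int)}"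

definition rat_vec :: "real ^ 'n \<Rightarrow> bool" where
  "rat_vec y \<longleftrightarrow> (\<forall>i. y $ i \<in> \<rat>)"

definition den :: "real ^ 'n \<Rightarrow> nat" where
  "den y = (THE q. q > 0 \<and> (\<exists>k :: int ^ 'n. (\<forall>i. y $ i = real_of_int (k $ i) / real q)
              \<and> Gcd (insert (int q) (range (\<lambda>i. k $ i))) = 1))"

definition L_star :: "(real ^ 'n) set" where
  "L_star = {y. rat_vec y \<and> squarefree (den y)}"

definition zeta_nat :: "nat \<Rightarrow> real" where
  "zeta_nat d = (\<Sum>n. 1 / real (Suc n) ^ d)"

end

theory Submission
  imports Defs
begin

text \<open>
  By Moebius inversion, a nonzero lattice point \<open>x\<close> is visible iff \<open>\<Sum>{\<mu>(m) | m dvd gcd(x)} = 1\<close>,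
  so the exponential sum over the visible points of \<open>B\<^sub>r(0)\<close> equals \<open>\<Sum>\<^sub>m \<mu>(m) S\<^sub>m(r)\<close>, where
  \<open>S\<^sub>m(r)\<close> is the corresponding sum over the nonzero points of \<open>m\<int>\<^sup>d\<close>.
  Normalised by the volume, \<open>S\<^sub>m(r)\<close> tends to \<open>m\<^sup>-\<^sup>d\<close> if \<open>m y \<in> \<int>\<^sup>d\<close> and to \<open>0\<close> otherwise:
  shifting by a unit vector multiplies the lattice sum by a character value while changing
  it only in a shell around the sphere. Since \<open>|S\<^sub>m(r)| / vol(B\<^sub>r) \<le> C m\<^sup>-\<^sup>d\<close> and \<open>d \<ge> 2\<close>,
  Tannery's theorem gives \<open>a\<^sub>V(y) = \<Sum>{\<mu>(m) m\<^sup>-\<^sup>d | m y \<in> \<int>\<^sup>d}\<close>. This vanishes unless \<open>y\<close> is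
  rational; for \<open>q = den(y)\<close> it is \<open>q\<^sup>-\<^sup>d \<Sum>\<^sub>k \<mu>(q k) k\<^sup>-\<^sup>d\<close>, which is zero unless \<open>q\<close> is
  squarefree and is otherwise computed by splitting off the primes of \<open>q\<close> one at a time,
  ending with \<open>\<Sum>\<^sub>k \<mu>(k) k\<^sup>-\<^sup>d = 1/\<zeta>(d)\<close>.
\<close>

section \<open>Lattice points in balls\<close>

definition int_vecs :: "(real ^ 'n) set" where
  "int_vecs = {x. \<forall>i. x $ i \<in> \<int>}"

lemma inner_int_vecs: "x \<in> int_vecs \<Longrightarrow> y \<in> int_vecs \<Longrightarrow> (x::real^'n) \<bullet> y \<in> \<int>"
  unfolding inner_vec_def int_vecs_def by (auto intro!: Ints_sum Ints_mult)

lemma int_vecs_diff: "x \<in> int_vecs \<Longrightarrow> y \<in> int_vecs \<Longrightarrow> x - y \<in> int_vecs"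
  and int_vecs_add: "x \<in> int_vecs \<Longrightarrow> y \<in> int_vecs \<Longrightarrow> x + y \<in> int_vecs"
  by (auto simp: int_vecs_def)

lemma axis_in_int_vecs: "axis j 1 \<in> int_vecs"
  by (auto simp: int_vecs_def axis_def)

definition ball_vol :: "'n itself \<Rightarrow> real \<Rightarrow> real" where
  "ball_vol _ r = unit_ball_vol CARD('n) * r ^ CARD('n)"

lemma ball_vol_pos: "r > 0 \<Longrightarrow> ball_vol TYPE('n) r > 0"
  by (simp add: ball_vol_def)

lemma ball_vol_scale: "real m > 0 \<Longrightarrow> ball_vol TYPE('n) r = real m ^ CARD('n) * ball_vol TYPE('n) (r / real m)"
  by (simp add: ball_vol_def power_divide)

lemma ball_vol_at_top: "filterlim (ball_vol TYPE('n::finite)) at_top at_top"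
  unfolding ball_vol_def
  by (rule filterlim_tendsto_pos_mult_at_top[OF tendsto_const])
     (auto intro!: filterlim_pow_at_top filterlim_ident)

lemma measure_cball_eq_ball_vol: "r \<ge> 0 \<Longrightarrow> measure lebesgue (cball (0::real^'n) r) = ball_vol TYPE('n) r"
proof -
  assume r: "r \<ge> 0"
  have "measure lebesgue (cball (0::real^'n) r) = measure lborel (cball (0::real^'n) r)"
    by (rule measure_completion) (simp add: borel_closed)
  also have "\<dots> = ball_vol TYPE('n) r" using r by (simp add: content_cball ball_vol_def)
  finally show ?thesis .
qed

lemma norm_diff_le_card_unit_cube:
  fixes x z :: "real ^ 'n"
  assumes "\<forall>i. x $ i \<le> z $ i \<and> z $ i \<le> x $ i + 1"
  shows "norm (z - x) \<le> real CARD('n)"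
proof -
  have "norm (z - x) \<le> (\<Sum>i\<in>UNIV. \<bar>(z - x) $ i\<bar>)" by (rule norm_le_l1_cart)
  also have "\<dots> \<le> (\<Sum>i\<in>(UNIV::'n set). 1)"
  proof (intro sum_mono)
    fix i show "\<bar>(z - x) $ i\<bar> \<le> 1" using assms[rule_format, of i] by auto
  qed
  finally show ?thesis by simp
qed

lemma one_inner_Basis: "b \<in> Basis \<Longrightarrow> (1::real^'n) \<bullet> b = 1"
  by (auto simp: Basis_vec_def cart_eq_inner_axis[symmetric])

lemma disjoint_family_on_int_vecs_boxes:
  "disjoint_family_on (\<lambda>x::real^'n. box x (x + 1)) int_vecs"
  unfolding disjoint_family_on_def
proof (intro ballI impI equalityI subsetI)
  fix a b z :: "real^'n"
  assume ab: "a \<in> int_vecs" "b \<in> int_vecs" "a \<noteq> b" and z: "z \<in> box a (a + 1) \<inter> box b (b + 1)"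
  have "a $ i = b $ i" for i
  proof -
    from ab have "a $ i \<in> \<int>" "b $ i \<in> \<int>" by (auto simp: int_vecs_def)
    then obtain m k where m: "a $ i = of_int m" and k: "b $ i = of_int k" by (auto elim!: Ints_cases)
    from z have "a $ i < z $ i" "z $ i < a $ i + 1" "b $ i < z $ i" "z $ i < b $ i + 1"
      by (auto simp: mem_box_cart)
    with m k have "m < k + 1" "k < m + 1" by linarith+
    then show ?thesis using m k by simp
  qed
  with ab show "z \<in> {}" by (simp add: vec_eq_iff)
qed auto

text \<open>The unit cubes at the points of \<open>F\<close> are disjoint and lie in the ball of radius \<open>r + d\<close>.\<close>
lemma card_int_vecs_cball_le:
  fixes F :: "(real ^ 'n) set"
  assumes F: "finite F" "F \<subseteq> int_vecs \<inter> cball 0 r" and r: "r \<ge> 0"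
  shows "real (card F) \<le> unit_ball_vol CARD('n) * (r + CARD('n)) ^ CARD('n)"
proof -
  let ?B = "\<lambda>x::real^'n. box x (x + 1)"
  have one: "measure lborel (?B x) = 1" for x
    by (simp add: measure_lborel_box_eq inner_add_left one_inner_Basis)
  have disj: "disjoint_family_on ?B F"
    using F(2) by (blast intro: disjoint_family_on_mono disjoint_family_on_int_vecs_boxes)
  have "measure lborel (\<Union>x\<in>F. ?B x) = (\<Sum>x\<in>F. measure lborel (?B x))"
    by (rule measure_finite_Union) (use F disj in \<open>auto simp: emeasure_lborel_box_eq\<close>)
  also have "\<dots> = real (card F)" by (simp add: one)
  finally have eq: "measure lborel (\<Union>x\<in>F. ?B x) = real (card F)" .
  have sub: "(\<Union>x\<in>F. ?B x) \<subseteq> cball 0 (r + CARD('n))"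
  proof clarify
    fix x z assume x: "x \<in> F" and z: "z \<in> ?B x"
    have "norm (z - x) \<le> real CARD('n)"
      using z by (intro norm_diff_le_card_unit_cube) (auto simp: mem_box_cart less_imp_le)
    moreover have "norm x \<le> r" using x F by auto
    moreover have "norm z \<le> norm x + norm (z - x)" by (metis norm_triangle_sub add.commute)
    ultimately show "z \<in> cball 0 (r + CARD('n))" by auto
  qed
  have "measure lborel (\<Union>x\<in>F. ?B x) \<le> measure lborel (cball (0::real^'n) (r + CARD('n)))"
  proof (rule measure_mono_fmeasurable[OF sub])
    show "(\<Union>x\<in>F. ?B x) \<in> sets lborel" by (auto intro!: borel_open)
  qed (auto intro!: fmeasurable_compact)
  also have "\<dots> = unit_ball_vol CARD('n) * (r + CARD('n)) ^ CARD('n)"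
    using r by (subst content_cball) auto
  finally show ?thesis using eq by simp
qed

lemma finite_int_vecs_cball: "finite (int_vecs \<inter> cball (0::real^'n) r)"
proof (cases "r \<ge> 0")
  case False
  then have "cball (0::real^'n) r = {}" by auto
  then show ?thesis by simp
next
  case True
  show ?thesis
  proof (rule ccontr)
    assume inf: "infinite (int_vecs \<inter> cball (0::real^'n) r)"
    obtain F where F: "finite F" "F \<subseteq> int_vecs \<inter> cball (0::real^'n) r"
      "card F = nat \<lceil>unit_ball_vol CARD('n) * (r + CARD('n)) ^ CARD('n)\<rceil> + 1"
      using infinite_arbitrarily_large[OF inf] by metis
    from card_int_vecs_cball_le[OF F(1,2) True] F(3) show False by linarith
  qed
qed

lemma card_int_vecs_cball_ge:
  assumes r: "r \<ge> real CARD('n)"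
  shows "unit_ball_vol CARD('n) * (r - CARD('n)) ^ CARD('n) \<le> real (card (int_vecs \<inter> cball (0::real^'n) r))"
proof -
  let ?F = "int_vecs \<inter> cball (0::real^'n) r"
  let ?B = "\<lambda>x::real^'n. cbox x (x + 1)"
  have one: "measure lborel (?B x) = 1" for x
    by (simp add: measure_lborel_cbox_eq inner_add_left one_inner_Basis)
  have sub: "cball 0 (r - CARD('n)) \<subseteq> (\<Union>x\<in>?F. ?B x)"
  proof
    fix z :: "real^'n" assume z: "z \<in> cball 0 (r - CARD('n))"
    define x :: "real^'n" where "x = (\<chi> i. of_int \<lfloor>z $ i\<rfloor>)"
    have xl: "x \<in> int_vecs" by (simp add: x_def int_vecs_def)
    have bnd: "\<forall>i. x $ i \<le> z $ i \<and> z $ i \<le> x $ i + 1"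
      by (simp add: x_def)
    then have zb: "z \<in> ?B x" by (simp add: mem_box_cart)
    have "norm (z - x) \<le> real CARD('n)" by (rule norm_diff_le_card_unit_cube[OF bnd])
    moreover have "norm x \<le> norm z + norm (z - x)" by (metis norm_triangle_sub norm_minus_commute)
    ultimately have "norm x \<le> r" using z by auto
    with xl zb show "z \<in> (\<Union>x\<in>?F. ?B x)" by auto
  qed
  have "unit_ball_vol CARD('n) * (r - CARD('n)) ^ CARD('n) = measure lborel (cball (0::real^'n) (r - CARD('n)))"
    using r by (subst content_cball) auto
  also have "\<dots> \<le> measure lborel (\<Union>x\<in>?F. ?B x)"
  proof (rule measure_mono_fmeasurable[OF sub])
    show "(\<Union>x\<in>?F. ?B x) \<in> fmeasurable lborel"
      by (intro fmeasurable_compact compact_UN finite_int_vecs_cball) auto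
  qed auto
  also have "\<dots> \<le> (\<Sum>x\<in>?F. measure lborel (?B x))"
    by (rule measure_UNION_le) (auto intro: finite_int_vecs_cball)
  also have "\<dots> = real (card ?F)" by (simp add: one)
  finally show ?thesis .
qed

lemma tendsto_shifted_power_ratio: "((\<lambda>r::real. (r + c) ^ d / r ^ d) \<longlongrightarrow> 1) at_top"
proof -
  have "((\<lambda>r::real. (1 + c / r) ^ d) \<longlongrightarrow> (1 + 0) ^ d) at_top"
    by (intro tendsto_intros tendsto_divide_0[OF tendsto_const] filterlim_at_top_imp_at_infinity filterlim_ident)
  moreover have "eventually (\<lambda>r::real. (1 + c / r) ^ d = (r + c) ^ d / r ^ d) at_top"
    using eventually_gt_at_top[of 0]
  proof eventually_elim
    case (elim r)
    then have "1 + c / r = (r + c) / r" by (simp add: field_simps)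
    then show ?case by (simp add: power_divide)
  qed
  ultimately show ?thesis by (simp add: tendsto_cong)
qed

lemma card_int_vecs_cball_asymp:
  "((\<lambda>r. real (card (int_vecs \<inter> cball (0::real^'n) (r + a))) / ball_vol TYPE('n) r) \<longlongrightarrow> 1) at_top"
proof (rule tendsto_sandwich)
  let ?w = "unit_ball_vol CARD('n)"
  have w: "?w > 0" by simp
  show "eventually (\<lambda>r. (r + (a - CARD('n))) ^ CARD('n) / r ^ CARD('n)
          \<le> real (card (int_vecs \<inter> cball (0::real^'n) (r + a))) / ball_vol TYPE('n) r) at_top"
    using eventually_ge_at_top[of "max 1 (real CARD('n) - a + 1)"]
  proof eventually_elim
    case (elim r)
    have rp: "r > 0" using elim by simp
    have "?w * (r + a - CARD('n)) ^ CARD('n) \<le> real (card (int_vecs \<inter> cball (0::real^'n) (r + a)))"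
      by (rule card_int_vecs_cball_ge) (use elim in auto)
    then show ?case using rp w by (simp add: ball_vol_def divide_simps algebra_simps)
  qed
  show "eventually (\<lambda>r. real (card (int_vecs \<inter> cball (0::real^'n) (r + a))) / ball_vol TYPE('n) r
          \<le> (r + (a + CARD('n))) ^ CARD('n) / r ^ CARD('n)) at_top"
    using eventually_ge_at_top[of "\<bar>a\<bar> + 1"]
  proof eventually_elim
    case (elim r)
    have rp: "r > 0" using elim by simp
    have "real (card (int_vecs \<inter> cball (0::real^'n) (r + a))) \<le> ?w * (r + a + CARD('n)) ^ CARD('n)"
      by (rule card_int_vecs_cball_le) (use elim in \<open>auto intro: finite_int_vecs_cball\<close>)
    then show ?case using rp w by (simp add: ball_vol_def divide_simps algebra_simps)
  qed
qed (rule tendsto_shifted_power_ratio)+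

section \<open>Exponential sums over the integer lattice\<close>

definition add_char :: "real \<Rightarrow> complex" where
  "add_char t = exp (- (2 * complex_of_real pi * \<i> * complex_of_real t))"

lemma norm_add_char [simp]: "norm (add_char t) = 1"
  by (simp add: add_char_def)

lemma add_char_add: "add_char (s + t) = add_char s * add_char t"
  by (simp add: add_char_def distrib_left exp_add[symmetric] algebra_simps)

lemma add_char_eq_1_iff: "add_char t = 1 \<longleftrightarrow> t \<in> \<int>"
proof -
  have "add_char t = 1 \<longleftrightarrow> (\<exists>n::int. - (2 * pi * t) = of_int (2 * n) * pi)"
    unfolding add_char_def exp_eq_1 by simp
  also have "\<dots> \<longleftrightarrow> (\<exists>n::int. t = of_int (- n))"
  proof
    assume "\<exists>n::int. - (2 * pi * t) = of_int (2 * n) * pi"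
    then obtain n :: int where "- (2 * pi * t) = of_int (2 * n) * pi" by blast
    then have "pi * (- t) = pi * of_int n" by (simp add: algebra_simps)
    then have "- t = of_int n" using pi_gt_zero by (metis mult_cancel_left pi_neq_zero)
    then have "t = of_int (- n)" by simp
    then show "\<exists>n::int. t = of_int (- n)" by blast
  next
    assume "\<exists>n::int. t = of_int (- n)"
    then obtain n :: int where "t = of_int (- n)" by blast
    then show "\<exists>n::int. - (2 * pi * t) = of_int (2 * n) * pi" by (intro exI[of _ n]) simp
  qed
  also have "\<dots> \<longleftrightarrow> t \<in> \<int>"
    by (metis Ints_cases Ints_of_int minus_minus)
  finally show ?thesis .
qed

lemma norm_sum_diff_le_card:
  fixes f :: "'a \<Rightarrow> complex"
  assumes "finite A" "finite B" "C \<subseteq> A" "C \<subseteq> B" "\<And>x. norm (f x) \<le> 1"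
  shows "norm (sum f A - sum f B) \<le> real (card (A - C)) + real (card (B - C))"
proof -
  have "sum f A - sum f B = sum f (A - C) - sum f (B - C)"
    using assms by (simp add: sum.subset_diff[of C A] sum.subset_diff[of C B])
  also have "norm \<dots> \<le> norm (sum f (A - C)) + norm (sum f (B - C))" by (rule norm_triangle_ineq4)
  also have "norm (sum f (A - C)) \<le> (\<Sum>x\<in>A - C. 1)" by (rule sum_norm_le) (rule assms(5))
  also have "norm (sum f (B - C)) \<le> (\<Sum>x\<in>B - C. 1)" by (rule sum_norm_le) (rule assms(5))
  finally show ?thesis by simp
qed

lemma norm_exp_sum_shift_le:
  fixes y u :: "real^'n"
  assumes u: "u \<in> int_vecs" "norm u = 1"
  defines "P \<equiv> \<lambda>r. int_vecs \<inter> cball (0::real^'n) r"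
  shows "norm ((add_char (u \<bullet> y) - 1) * (\<Sum>x\<in>P r. add_char (x \<bullet> y)))
           \<le> 2 * (real (card (P (r + 1))) - real (card (P (r - 1))))"
proof -
  let ?S = "\<Sum>x\<in>P r. add_char (x \<bullet> y)"
  let ?A = "(\<lambda>x. x + u) ` P r" and ?C = "P (r - 1)"
  have fin: "finite (P s)" for s by (simp add: P_def finite_int_vecs_cball)
  have "add_char (u \<bullet> y) * ?S = (\<Sum>x\<in>P r. add_char ((x + u) \<bullet> y))"
    by (simp add: sum_distrib_left inner_add_left add_char_add mult.commute)
  also have "\<dots> = (\<Sum>z\<in>?A. add_char (z \<bullet> y))"
    by (subst sum.reindex) (auto simp: inj_on_def)
  finally have shifted: "(add_char (u \<bullet> y) - 1) * ?S = (\<Sum>z\<in>?A. add_char (z \<bullet> y)) - ?S"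
    by (simp add: algebra_simps)
  have CA: "?C \<subseteq> ?A"
  proof
    fix c assume c: "c \<in> ?C"
    have "norm (c - u) \<le> norm c + norm u" by (rule norm_triangle_ineq4)
    then have "c - u \<in> P r" using c u by (auto simp: P_def int_vecs_diff)
    then show "c \<in> ?A" by (auto intro: image_eqI[of _ _ "c - u"])
  qed
  have AD: "?A \<subseteq> P (r + 1)"
  proof clarify
    fix x assume "x \<in> P r"
    moreover have "norm (x + u) \<le> norm x + norm u" by (rule norm_triangle_ineq)
    ultimately show "x + u \<in> P (r + 1)" using u by (auto simp: P_def int_vecs_add)
  qed
  have CB: "?C \<subseteq> P r" and BD: "P r \<subseteq> P (r + 1)" and CD: "?C \<subseteq> P (r + 1)"
    by (auto simp: P_def)
  have "norm ((\<Sum>z\<in>?A. add_char (z \<bullet> y)) - ?S) \<le> real (card (?A - ?C)) + real (card (P r - ?C))"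
    by (rule norm_sum_diff_le_card) (use fin CA CB in auto)
  also have "real (card (?A - ?C)) \<le> real (card (P (r + 1) - ?C))"
    using AD fin by (intro of_nat_mono card_mono) auto
  also have "real (card (P r - ?C)) \<le> real (card (P (r + 1) - ?C))"
    using BD fin by (intro of_nat_mono card_mono) auto
  also have "real (card (P (r + 1) - ?C)) = real (card (P (r + 1))) - real (card ?C)"
    using CD fin by (simp add: card_Diff_subset of_nat_diff card_mono)
  finally show ?thesis by (simp add: shifted)
qed

lemma int_vecs_exp_sum_asymp:
  "((\<lambda>r. (\<Sum>x\<in>int_vecs \<inter> cball (0::real^'n) r. add_char (x \<bullet> y)) / complex_of_real (ball_vol TYPE('n) r))
     \<longlongrightarrow> (if y \<in> int_vecs then 1 else 0)) at_top"
proof (cases "y \<in> int_vecs")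
  case True
  have eq: "(\<Sum>x\<in>int_vecs \<inter> cball (0::real^'n) r. add_char (x \<bullet> y)) / complex_of_real (ball_vol TYPE('n) r)
        = complex_of_real (real (card (int_vecs \<inter> cball (0::real^'n) (r + 0))) / ball_vol TYPE('n) r)" for r
  proof -
    have "(\<Sum>x\<in>int_vecs \<inter> cball (0::real^'n) r. add_char (x \<bullet> y)) = (\<Sum>x\<in>int_vecs \<inter> cball (0::real^'n) r. 1)"
      by (intro sum.cong refl) (use True inner_int_vecs in \<open>auto simp: add_char_eq_1_iff\<close>)
    then show ?thesis by simp
  qed
  have "((\<lambda>r. complex_of_real (real (card (int_vecs \<inter> cball (0::real^'n) (r + 0))) / ball_vol TYPE('n) r))
     \<longlongrightarrow> complex_of_real 1) at_top" by (rule tendsto_of_real[OF card_int_vecs_cball_asymp])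
  then show ?thesis using True by (simp only: eq if_True of_real_1)
next
  case False
  then obtain j where j: "y $ j \<notin> \<int>" by (auto simp: int_vecs_def)
  define u :: "real^'n" where "u = axis j 1"
  have u: "u \<in> int_vecs" "norm u = 1" by (simp_all add: u_def axis_in_int_vecs)
  define P where "P = (\<lambda>r. int_vecs \<inter> cball (0::real^'n) r)"
  define S where "S = (\<lambda>r. \<Sum>x\<in>P r. add_char (x \<bullet> y))"
  define e where "e = add_char (u \<bullet> y)"
  have e1: "e - 1 \<noteq> 0"
    using j by (simp add: e_def u_def add_char_eq_1_iff cart_eq_inner_axis inner_commute)
  have lim0: "((\<lambda>r. 2 * (real (card (P (r + 1))) / ball_vol TYPE('n) r - real (card (P (r + - 1))) / ball_vol TYPE('n) r))
              \<longlongrightarrow> 2 * (1 - 1)) at_top"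
    unfolding P_def by (intro tendsto_intros card_int_vecs_cball_asymp)
  have "((\<lambda>r. (e - 1) * S r / complex_of_real (ball_vol TYPE('n) r)) \<longlongrightarrow> 0) at_top"
  proof (rule Lim_null_comparison)
    show "eventually (\<lambda>r. norm ((e - 1) * S r / complex_of_real (ball_vol TYPE('n) r))
            \<le> 2 * (real (card (P (r + 1))) / ball_vol TYPE('n) r - real (card (P (r + - 1))) / ball_vol TYPE('n) r)) at_top"
      using eventually_gt_at_top[of 0]
    proof eventually_elim
      case (elim r)
      have v: "ball_vol TYPE('n) r > 0" using elim by (rule ball_vol_pos)
      have "norm ((e - 1) * S r / complex_of_real (ball_vol TYPE('n) r)) = norm ((e - 1) * S r) / ball_vol TYPE('n) r"
        using v by (simp add: norm_divide)
      also have "\<dots> \<le> 2 * (real (card (P (r + 1))) - real (card (P (r - 1)))) / ball_vol TYPE('n) r"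
        using v norm_exp_sum_shift_le[OF u, of y r] by (simp add: divide_right_mono e_def S_def P_def)
      finally show ?case by (simp add: diff_divide_distrib)
    qed
  qed (use lim0 in simp)
  then have "((\<lambda>r. (e - 1) * S r / complex_of_real (ball_vol TYPE('n) r) / (e - 1)) \<longlongrightarrow> 0 / (e - 1)) at_top"
    by (intro tendsto_intros) (use e1 in auto)
  then show ?thesis using False e1 by (simp add: S_def P_def)
qed

section \<open>The Moebius function\<close>

definition moebius :: "nat \<Rightarrow> real" where
  "moebius n = (if squarefree n then (-1) ^ card (prime_factors n) else 0)"

lemma moebius_1 [simp]: "moebius 1 = 1" by (simp add: moebius_def)

lemma moebius_0 [simp]: "moebius 0 = 0" by (simp add: moebius_def)

lemma abs_moebius_le: "\<bar>moebius n\<bar> \<le> 1" by (simp add: moebius_def)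

lemma moebius_not_squarefree: "\<not> squarefree n \<Longrightarrow> moebius n = 0" by (simp add: moebius_def)

lemma moebius_mult_prime_dvd:
  assumes "prime p" "p dvd n" shows "moebius (p * n) = 0"
proof -
  have "p ^ 2 dvd p * n" using assms by (simp add: power2_eq_square)
  then have "\<not> squarefree (p * n)" using assms by (intro not_squarefreeI) auto
  then show ?thesis by (simp add: moebius_def)
qed

lemma moebius_mult_prime:
  assumes p: "prime p" and n: "\<not> p dvd n" shows "moebius (p * n) = - moebius n"
proof -
  have n0: "n \<noteq> 0" using n by (metis dvd_0_right)
  have cop: "coprime p n" using p n by (simp add: prime_imp_coprime)
  have sq: "squarefree (p * n) \<longleftrightarrow> squarefree n"
    using squarefree_mult_coprime[OF cop squarefree_prime[OF p]] squarefree_multD(2)[of p n] by blast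
  have pf: "prime_factors (p * n) = insert p (prime_factors n)"
    using p n0 by (simp add: prime_factors_product prime_prime_factors)
  have "p \<notin> prime_factors n" using n by (auto simp: prime_factors_dvd)
  then have "card (prime_factors (p * n)) = Suc (card (prime_factors n))" by (simp add: pf)
  then show ?thesis by (simp add: moebius_def sq)
qed

text \<open>For a prime \<open>p\<close> dividing \<open>n\<close>, the divisors \<open>m\<close> and \<open>p m\<close> with \<open>\<not> p dvd m\<close> cancel in pairs and
  the other divisors have \<open>\<mu> = 0\<close>.\<close>
lemma sum_moebius_divisors:
  assumes "n > 0"
  shows "(\<Sum>m\<in>{m. m dvd n}. moebius m) = (if n = 1 then 1 else 0)"
proof (cases "n = 1")
  case True then show ?thesis using moebius_1 by simp
next
  case False
  then obtain p where p: "prime p" "p dvd n" using assms prime_factor_nat[of n] by auto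
  define D where "D = {m. m dvd n}"
  define D1 where "D1 = {m\<in>D. \<not> p dvd m}"
  define E where "E = {k. p * k dvd n}"
  have finD: "finite D" using assms by (simp add: D_def)
  have finE: "finite E" using assms p by (auto simp: E_def intro: finite_subset[OF _ finD] simp: D_def dvd_mult_right)
  have "D - D1 = (\<lambda>k. p * k) ` E"
  proof (intro equalityI subsetI)
    fix m assume "m \<in> D - D1"
    then have "m dvd n" "p dvd m" by (auto simp: D1_def D_def)
    then obtain k where "m = p * k" by (elim dvdE)
    with \<open>m dvd n\<close> show "m \<in> (\<lambda>k. p * k) ` E" by (auto simp: E_def)
  next
    fix m assume "m \<in> (\<lambda>k. p * k) ` E"
    then show "m \<in> D - D1" by (auto simp: E_def D_def D1_def)
  qed
  have "sum moebius D = sum moebius D1 + sum moebius (D - D1)"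
    using finD by (simp add: D1_def sum.subset_diff[of D1 D])
  also have "sum moebius (D - D1) = (\<Sum>k\<in>E. moebius (p * k))"
    using \<open>D - D1 = _\<close> p by (simp add: sum.reindex inj_on_def)
  also have "\<dots> = (\<Sum>k\<in>D1. moebius (p * k))"
  proof (rule sum.mono_neutral_right[OF finE])
    show "D1 \<subseteq> E"
    proof
      fix k assume "k \<in> D1"
      then have "k dvd n" "\<not> p dvd k" by (auto simp: D1_def D_def)
      moreover have "coprime p k" using p \<open>\<not> p dvd k\<close> by (simp add: prime_imp_coprime)
      ultimately show "k \<in> E" using p by (auto simp: E_def intro: divides_mult)
    qed
    show "\<forall>k\<in>E - D1. moebius (p * k) = 0"
    proof
      fix k assume "k \<in> E - D1"
      then have "p dvd k" by (auto simp: E_def D1_def D_def dvd_mult_right)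
      then show "moebius (p * k) = 0" using p(1) by (intro moebius_mult_prime_dvd)
    qed
  qed
  also have "\<dots> = (\<Sum>k\<in>D1. - moebius k)"
    using p by (intro sum.cong refl) (auto simp: D1_def moebius_mult_prime)
  finally show ?thesis using False by (simp add: D_def sum_negf)
qed

section \<open>Denominators of rational vectors\<close>

definition clears_den :: "real^'n \<Rightarrow> nat \<Rightarrow> bool" where
  "clears_den y m \<longleftrightarrow> m > 0 \<and> (\<forall>i. real m * y $ i \<in> \<int>)"

definition min_den :: "real^'n \<Rightarrow> nat" where
  "min_den y = (LEAST m. clears_den y m)"

lemma clears_den_exists:
  assumes "rat_vec y" shows "\<exists>m. clears_den y m"
proof -
  have "\<forall>i. \<exists>b::int. b > 0 \<and> of_int b * y $ i \<in> \<int>"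
  proof
    fix i
    have "y $ i \<in> \<rat>" using assms by (simp add: rat_vec_def)
    then obtain a b where ab: "b > 0" "y $ i = of_int a / of_int b" by (elim Rats_cases')
    then have "of_int b * y $ i = of_int a" by simp
    with ab show "\<exists>b::int. b > 0 \<and> of_int b * y $ i \<in> \<int>" by (intro exI[of _ b]) auto
  qed
  then obtain B where B: "\<And>i. B i > (0::int)" "\<And>i. of_int (B i) * y $ i \<in> \<int>" by metis
  define m where "m = nat (\<Prod>i\<in>UNIV. B i)"
  have mp: "(\<Prod>i\<in>UNIV. B i) > 0" using B(1) by (simp add: prod_pos)
  have "real m * y $ i \<in> \<int>" for i
  proof -
    have "real m = of_int (\<Prod>i\<in>UNIV. B i)" using mp by (simp add: m_def)
    also have "\<dots> = of_int (B i) * of_int (\<Prod>j\<in>UNIV - {i}. B j)"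
      by (simp add: prod.remove[of UNIV i])
    finally have rm: "real m = of_int (B i) * of_int (\<Prod>j\<in>UNIV - {i}. B j)" .
    have "real m * y $ i = (of_int (B i) * y $ i) * of_int (\<Prod>j\<in>UNIV - {i}. B j)"
      unfolding rm by (simp only: mult_ac)
    then show ?thesis using B(2)[of i] by (metis Ints_mult Ints_of_int)
  qed
  moreover have "m > 0" using mp by (simp add: m_def)
  ultimately show ?thesis by (auto simp: clears_den_def)
qed

lemma clears_den_gcd:
  assumes "clears_den y a" "clears_den y b" shows "clears_den y (gcd a b)"
proof -
  obtain u v :: int where uv: "u * int a + v * int b = gcd (int a) (int b)" using bezout_int by blast
  have "real (gcd a b) = of_int u * real a + of_int v * real b"
    by (metis (mono_tags, lifting) gcd_int_int_eq of_int_add of_int_mult of_int_of_nat_eq uv)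
  then have "real (gcd a b) * y $ i = of_int u * (real a * y $ i) + of_int v * (real b * y $ i)" for i
    by (simp add: algebra_simps)
  then show ?thesis using assms by (auto simp: clears_den_def intro!: Ints_add Ints_mult)
qed

lemma clears_den_min_den: "rat_vec y \<Longrightarrow> clears_den y (min_den y)"
  unfolding min_den_def using clears_den_exists by (metis LeastI)

lemma min_den_pos: "rat_vec y \<Longrightarrow> min_den y > 0"
  using clears_den_min_den by (auto simp: clears_den_def)

lemma min_den_dvd:
  assumes y: "rat_vec y" and m: "clears_den y m"
  shows "min_den y dvd m"
proof -
  have Q: "clears_den y (min_den y)" using y by (rule clears_den_min_den)
  then have "clears_den y (gcd (min_den y) m)" using m by (rule clears_den_gcd)
  then have "min_den y \<le> gcd (min_den y) m" unfolding min_den_def by (rule Least_le)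
  moreover have "gcd (min_den y) m \<le> min_den y"
    using Q by (intro gcd_le1_nat) (auto simp: clears_den_def)
  ultimately show ?thesis by (metis antisym gcd_dvd2)
qed

lemma clears_den_iff_min_den_dvd:
  assumes y: "rat_vec y" and m: "m > 0"
  shows "clears_den y m \<longleftrightarrow> min_den y dvd m"
proof
  assume "min_den y dvd m"
  then obtain t where t: "m = min_den y * t" by (elim dvdE)
  show "clears_den y m"
    unfolding clears_den_def
  proof (intro conjI allI)
    fix i
    have "real m * y $ i = real t * (real (min_den y) * y $ i)" by (simp add: t)
    moreover have "real (min_den y) * y $ i \<in> \<int>"
      using clears_den_min_den[OF y] by (simp add: clears_den_def)
    ultimately show "real m * y $ i \<in> \<int>" by (metis Ints_mult Ints_of_nat)
  qed (rule m)
qed (rule min_den_dvd[OF y])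

lemma Gcd_min_den_numerators:
  assumes y: "rat_vec y"
  defines "q \<equiv> min_den y"
  shows "Gcd (insert (int q) (range (\<lambda>i. \<lfloor>real q * y $ i\<rfloor>))) = 1"
proof -
  define g where "g = Gcd (insert (int q) (range (\<lambda>i. \<lfloor>real q * y $ i\<rfloor>)))"
  have Q: "clears_den y q" using y unfolding q_def by (rule clears_den_min_den)
  have qpos: "q > 0" using y unfolding q_def by (rule min_den_pos)
  have gq: "g dvd int q" unfolding g_def by (rule Gcd_dvd) simp
  have gk: "g dvd \<lfloor>real q * y $ i\<rfloor>" for i unfolding g_def by (rule Gcd_dvd) simp
  obtain t where t: "int q = g * t" using gq by (elim dvdE)
  have "g \<noteq> 0" using gq qpos by auto
  moreover have "g \<ge> 0" unfolding g_def by (rule Gcd_int_greater_eq_0)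
  ultimately have gpos: "g > 0" by simp
  have "g * t > 0" using qpos by (simp add: t[symmetric])
  then have tpos: "t > 0" using gpos by (rule zero_less_mult_pos)
  have "clears_den y (nat t)"
    unfolding clears_den_def
  proof (intro conjI allI)
    fix i
    obtain c where c: "\<lfloor>real q * y $ i\<rfloor> = g * c" using gk[of i] by (elim dvdE)
    have "real q = of_int g * of_int t" using t by (metis of_int_mult of_int_of_nat_eq)
    then have "of_int g * (real (nat t) * y $ i) = real q * y $ i"
      using tpos by (simp add: mult_ac)
    also have "\<dots> = of_int \<lfloor>real q * y $ i\<rfloor>" using Q by (simp add: clears_den_def)
    also have "\<dots> = of_int g * of_int c" by (simp add: c)
    finally have "real (nat t) * y $ i = of_int c" using gpos by simp
    then show "real (nat t) * y $ i \<in> \<int>" by simp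
  qed (use tpos in simp)
  then have "q dvd nat t" unfolding q_def by (rule min_den_dvd[OF y])
  then have "q \<le> nat t" using tpos by (simp add: dvd_imp_le)
  then have "g * t \<le> 1 * t" using tpos by (simp add: t[symmetric])
  then have "g \<le> 1" using tpos by (rule mult_right_le_imp_le)
  with gpos have "g = 1" by simp
  then show ?thesis by (simp only: g_def)
qed

lemma den_eq_min_den:
  fixes y :: "real^'n"
  assumes y: "rat_vec y" shows "den y = min_den y"
  unfolding den_def
proof (rule the_equality)
  let ?q = "min_den y"
  define k :: "int^'n" where "k = (\<chi> i. \<lfloor>real ?q * y $ i\<rfloor>)"
  have qpos: "?q > 0" using y by (rule min_den_pos)
  have "real_of_int (k $ i) = real ?q * y $ i" for i
    using clears_den_min_den[OF y] by (simp add: k_def clears_den_def)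
  then have "y $ i = real_of_int (k $ i) / real ?q" for i using qpos by simp
  moreover have "Gcd (insert (int ?q) (range (\<lambda>i. k $ i))) = 1"
    using Gcd_min_den_numerators[OF y] by (simp add: k_def)
  ultimately show "?q > 0 \<and> (\<exists>k :: int ^ 'n. (\<forall>i. y $ i = real_of_int (k $ i) / real ?q)
              \<and> Gcd (insert (int ?q) (range (\<lambda>i. k $ i))) = 1)"
    using qpos by blast
next
  fix q assume "q > 0 \<and> (\<exists>k :: int ^ 'n. (\<forall>i. y $ i = real_of_int (k $ i) / real q)
              \<and> Gcd (insert (int q) (range (\<lambda>i. k $ i))) = 1)"
  then obtain k :: "int^'n" where q: "q > 0" and yk: "\<And>i. y $ i = real_of_int (k $ i) / real q"
    and G: "Gcd (insert (int q) (range (\<lambda>i. k $ i))) = 1" by blast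
  have kk: "real q * y $ i = of_int (k $ i)" for i using yk[of i] q by simp
  then have "clears_den y q" using q by (simp add: clears_den_def)
  then have "min_den y dvd q" by (rule min_den_dvd[OF y])
  then obtain t where t: "q = min_den y * t" by (elim dvdE)
  have "int t dvd k $ i" for i
  proof -
    obtain c where c: "real (min_den y) * y $ i = of_int c"
      using clears_den_min_den[OF y] by (auto simp: clears_den_def elim!: Ints_cases)
    have "of_int (k $ i) = real t * (real (min_den y) * y $ i)" using kk[of i] t by (simp add: mult_ac)
    then have "k $ i = int t * c" using c by (metis of_int_eq_iff of_int_mult of_int_of_nat_eq)
    then show ?thesis by simp
  qed
  then have "int t dvd Gcd (insert (int q) (range (\<lambda>i. k $ i)))"
    using t by (intro Gcd_greatest) auto
  then have "int t dvd 1" by (simp only: G)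
  then have "t = 1" by simp
  then show "q = min_den y" using t by simp
qed

lemma den_0: "den (0::real^'n) = 1"
proof -
  have "rat_vec (0::real^'n)" by (simp add: rat_vec_def)
  moreover from this have "min_den (0::real^'n) dvd 1"
    by (rule min_den_dvd) (simp add: clears_den_def)
  ultimately show ?thesis by (simp add: den_eq_min_den)
qed

lemma dilate_in_int_vecs_iff: "m > 0 \<Longrightarrow> real m *\<^sub>R y \<in> int_vecs \<longleftrightarrow> clears_den y m"
  by (simp add: int_vecs_def clears_den_def)

lemma rat_vec_if_clears_den:
  assumes "clears_den y m" shows "rat_vec y"
  unfolding rat_vec_def
proof
  fix i
  have "real m * y $ i \<in> \<rat>" "m > 0" using assms Ints_subset_Rats by (auto simp: clears_den_def)
  then have "(real m * y $ i) / real m \<in> \<rat>" by (intro Rats_divide) auto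
  then show "y $ i \<in> \<rat>" using \<open>m > 0\<close> by simp
qed

section \<open>Dirichlet series of the Moebius function\<close>

definition moebius_series :: "nat \<Rightarrow> nat \<Rightarrow> real" where
  "moebius_series d q = (\<Sum>k. moebius (q * k) / real k ^ d)"

lemma summable_bounded_div_power:
  assumes "d \<ge> 2" "\<And>k. \<bar>c k\<bar> \<le> 1"
  shows "summable (\<lambda>k. c k / real k ^ d)"
proof (rule summable_comparison_test[OF _ inverse_power_summable[OF assms(1)]])
  show "\<exists>N. \<forall>n\<ge>N. norm (c n / real n ^ d) \<le> inverse (real n ^ d)"
  proof (intro exI allI impI)
    fix n :: nat
    have "\<bar>c n\<bar> / real n ^ d \<le> 1 / real n ^ d" using assms(2)[of n] by (intro divide_right_mono) auto
    then show "norm (c n / real n ^ d) \<le> inverse (real n ^ d)" by (simp add: abs_divide divide_inverse abs_mult)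
  qed
qed

lemma summable_moebius_series: "d \<ge> 2 \<Longrightarrow> summable (\<lambda>k. moebius (q * k) / real k ^ d)"
  by (rule summable_bounded_div_power) (auto simp: abs_moebius_le)

text \<open>Split the terms according to whether \<open>p\<close> divides \<open>k\<close>: the multiples of \<open>p\<close> contribute
  \<open>p\<^sup>-\<^sup>d\<close> times the series for \<open>p q\<close>, the others its negative, as \<open>\<mu>(p q k) = -\<mu>(q k)\<close> if \<open>\<not> p dvd k\<close>.\<close>
lemma moebius_series_prime_step:
  assumes d: "d \<ge> 2" and p: "prime p" and pq: "\<not> p dvd q"
  shows "moebius_series d q = (1 / real p ^ d - 1) * moebius_series d (p * q)"
proof -
  define f where "f = (\<lambda>k. moebius (q * k) / real k ^ d)"
  define g where "g = (\<lambda>k. moebius (p * q * k) / real k ^ d)"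
  define f1 where "f1 = (\<lambda>k. if p dvd k then f k else 0)"
  have p0: "p > 0" using p by (simp add: prime_gt_0_nat)
  have sg: "g sums moebius_series d (p * q)" unfolding g_def moebius_series_def using summable_moebius_series[OF d] by (rule summable_sums)
  have f2: "(if p dvd k then 0 else f k) = - g k" for k
  proof (cases "p dvd k")
    case True
    then have "p dvd q * k" by simp
    then have "moebius (p * (q * k)) = 0" using p by (intro moebius_mult_prime_dvd)
    then show ?thesis using True by (simp add: g_def mult.assoc)
  next
    case False
    then have "\<not> p dvd q * k" using p pq by (simp add: prime_dvd_mult_iff)
    then have "moebius (p * (q * k)) = - moebius (q * k)" using p by (intro moebius_mult_prime)
    then show ?thesis using False by (simp add: g_def f_def mult.assoc)
  qed
  have "(\<lambda>j. f1 (p * j)) = (\<lambda>j. (1 / real p ^ d) * g j)"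
    by (rule ext) (simp add: f1_def f_def g_def power_mult_distrib mult_ac)
  moreover have "(\<lambda>j. (1 / real p ^ d) * g j) sums ((1 / real p ^ d) * moebius_series d (p * q))"
    by (rule sums_mult[OF sg])
  ultimately have "(\<lambda>j. f1 (p * j)) sums ((1 / real p ^ d) * moebius_series d (p * q))" by simp
  then have s1: "f1 sums ((1 / real p ^ d) * moebius_series d (p * q))"
    by (subst (asm) sums_mono_reindex) (auto simp: strict_mono_def p0 f1_def)
  have s2: "(\<lambda>k. if p dvd k then 0 else f k) sums (- moebius_series d (p * q))"
    unfolding f2 by (rule sums_minus[OF sg])
  have "(\<lambda>k. f1 k + (if p dvd k then 0 else f k)) sums ((1 / real p ^ d) * moebius_series d (p * q) + - moebius_series d (p * q))"
    by (rule sums_add[OF s1 s2])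
  moreover have "(\<lambda>k. f1 k + (if p dvd k then 0 else f k)) = f" by (rule ext) (simp add: f1_def)
  ultimately have "f sums ((1 / real p ^ d) * moebius_series d (p * q) + - moebius_series d (p * q))" by simp
  then show ?thesis unfolding moebius_series_def f_def[symmetric] by (simp add: sums_iff algebra_simps)
qed

lemma moebius_series_not_squarefree:
  assumes "\<not> squarefree q" shows "moebius_series d q = 0"
proof -
  have "moebius (q * k) = 0" for k
    using assms squarefree_multD(1)[of q k] by (intro moebius_not_squarefree) auto
  then show ?thesis by (simp add: moebius_series_def)
qed

lemma scaled_moebius_series_mult_prime:
  assumes d: "d \<ge> 2" and p: "prime p" and pq: "\<not> p dvd q"
  shows "1 / real (p * q) ^ d * moebius_series d (p * q)
           = 1 / (1 - real p ^ d) * (1 / real q ^ d * moebius_series d q)"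
proof -
  have pd: "real p ^ d > 1" using prime_gt_1_nat[OF p] d by (intro one_less_power) auto
  define P where "P = 1 / real p ^ d"
  have P1: "P - 1 \<noteq> 0" using pd by (simp add: P_def field_simps)
  have "1 / real (p * q) ^ d * moebius_series d (p * q) = P * (1 / real q ^ d) * moebius_series d (p * q)"
    by (simp add: P_def power_mult_distrib)
  also have "\<dots> = P / (P - 1) * (1 / real q ^ d * ((P - 1) * moebius_series d (p * q)))"
    using P1 by simp
  also have "(P - 1) * moebius_series d (p * q) = moebius_series d q"
    unfolding P_def by (rule moebius_series_prime_step[OF d p pq, symmetric])
  also have "P / (P - 1) = 1 / (1 - real p ^ d)"
    using pd prime_gt_0_nat[OF p] by (simp add: P_def field_simps)
  finally show ?thesis .
qed

lemma moebius_series_squarefree: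
  assumes d: "d \<ge> 2"
  shows "squarefree q \<Longrightarrow>
           1 / real q ^ d * moebius_series d q = moebius_series d 1 * (\<Prod>p\<in>prime_factors q. 1 / (1 - real p ^ d))"
proof (induction q rule: less_induct)
  case (less q)
  have q0: "q \<noteq> 0" using less.prems by (metis not_squarefree_0)
  show ?case
  proof (cases "q = 1")
    case False
    then obtain p where p: "prime p" "p dvd q" using q0 prime_factor_nat[of q] by auto
    then obtain q' where q': "q = p * q'" by (elim dvdE)
    have q'0: "q' \<noteq> 0" using q0 q' by auto
    have pq': "\<not> p dvd q'"
    proof
      assume "p dvd q'"
      then have "p ^ 2 dvd q" using q' by (auto simp: power2_eq_square)
      then show False using less.prems p by (metis not_prime_unit squarefreeD)
    qed
    have sq': "squarefree q'" using less.prems q' squarefree_multD(2) by blast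
    have lt: "q' < q" using q' prime_gt_1_nat[OF p(1)] q'0 by simp
    have pf: "prime_factors q = insert p (prime_factors q')"
      using p q'0 q' by (simp add: prime_factors_product prime_prime_factors)
    have pn: "p \<notin> prime_factors q'" using pq' by (auto simp: prime_factors_dvd)
    have "1 / real q ^ d * moebius_series d q = 1 / (1 - real p ^ d) * (1 / real q' ^ d * moebius_series d q')"
      unfolding q' by (rule scaled_moebius_series_mult_prime[OF d p(1) pq'])
    also have "\<dots> = 1 / (1 - real p ^ d) * (moebius_series d 1 * (\<Prod>p\<in>prime_factors q'. 1 / (1 - real p ^ d)))"
      by (simp only: less.IH[OF lt sq'])
    also have "\<dots> = moebius_series d 1 * (\<Prod>p\<in>prime_factors q. 1 / (1 - real p ^ d))"
      using pf pn by (simp add: prod.insert)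
    finally show ?thesis .
  qed simp
qed

lemma zeta_nat_partial_sums:
  assumes d: "d \<ge> 2"
  shows "(\<lambda>M. \<Sum>n\<in>{1..M}. 1 / real n ^ d) \<longlonglongrightarrow> zeta_nat d"
    and "(\<Sum>n\<in>{1..M}. 1 / real n ^ d) \<le> zeta_nat d"
proof -
  have "summable (\<lambda>n. 1 / real n ^ d)"
    using inverse_power_summable[OF d] by (simp add: inverse_eq_divide)
  then have sz: "summable (\<lambda>n. 1 / real (Suc n) ^ d)" by (subst summable_Suc_iff)
  have eq: "(\<Sum>n\<in>{1..M}. 1 / real n ^ d) = (\<Sum>n<M. 1 / real (Suc n) ^ d)" for M
    by (simp add: sum.atLeast1_atMost_eq)
  show "(\<lambda>M. \<Sum>n\<in>{1..M}. 1 / real n ^ d) \<longlonglongrightarrow> zeta_nat d"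
    unfolding eq zeta_nat_def by (rule summable_LIMSEQ[OF sz])
  show "(\<Sum>n\<in>{1..M}. 1 / real n ^ d) \<le> zeta_nat d"
    unfolding eq zeta_nat_def by (rule sum_le_suminf[OF sz]) auto
qed

lemma zeta_nat_pos: "d \<ge> 2 \<Longrightarrow> zeta_nat d > 0"
  using zeta_nat_partial_sums(2)[of d 1] by simp

lemma sum_moebius_partial_zeta:
  assumes M: "M \<ge> 1"
  shows "(\<Sum>k\<in>{1..M}. moebius k / real k ^ d * (\<Sum>n\<in>{1..M div k}. 1 / real n ^ d)) = 1"
proof -
  have "(\<Sum>k\<in>{1..M}. moebius k / real k ^ d * (\<Sum>n\<in>{1..M div k}. 1 / real n ^ d))
      = (\<Sum>k\<in>{1..M}. \<Sum>n\<in>{1..M div k}. moebius k / real (k * n) ^ d)"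
    by (simp add: sum_distrib_left power_mult_distrib)
  also have "\<dots> = (\<Sum>(k, n)\<in>Sigma {1..M} (\<lambda>k. {1..M div k}). moebius k / real (k * n) ^ d)"
    by (rule sum.Sigma) auto
  also have "\<dots> = (\<Sum>(N, k)\<in>Sigma {1..M} (\<lambda>N. {k. k dvd N}). moebius k / real N ^ d)"
  proof (rule sum.reindex_bij_witness[where i = "\<lambda>(N, k). (k, N div k)" and j = "\<lambda>(k, n). (k * n, k)"])
    fix a assume "a \<in> Sigma {1..M} (\<lambda>k. {1..M div k})"
    then obtain k n where a: "a = (k, n)" "1 \<le> k" "k \<le> M" "1 \<le> n" "n \<le> M div k" by auto
    show "(case (case a of (k, n) \<Rightarrow> (k * n, k)) of (N, k) \<Rightarrow> (k, N div k)) = a" using a by simp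
    have "k * n \<le> k * (M div k)" using a by simp
    also have "\<dots> \<le> M" by simp
    finally show "(case a of (k, n) \<Rightarrow> (k * n, k)) \<in> Sigma {1..M} (\<lambda>N. {k. k dvd N})"
      using a by auto
    show "(case (case a of (k, n) \<Rightarrow> (k * n, k)) of (N, k) \<Rightarrow> moebius k / real N ^ d) =
          (case a of (k, n) \<Rightarrow> moebius k / real (k * n) ^ d)" using a by simp
  next
    fix b assume "b \<in> Sigma {1..M} (\<lambda>N. {k. k dvd N})"
    then obtain N k where b: "b = (N, k)" "1 \<le> N" "N \<le> M" "k dvd N" by auto
    have k: "k \<ge> 1" using b by (metis dvd_0_left_iff less_one not_le not_one_le_zero)
    show "(case (case b of (N, k) \<Rightarrow> (k, N div k)) of (k, n) \<Rightarrow> (k * n, k)) = b" using b by simp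
    have "k \<le> N" using b by (simp add: dvd_imp_le)
    moreover have "N div k \<ge> 1" using \<open>k \<le> N\<close> k by (simp add: div_greater_zero_iff Suc_le_eq)
    moreover have "N div k \<le> M div k" using b by (simp add: div_le_mono)
    ultimately show "(case b of (N, k) \<Rightarrow> (k, N div k)) \<in> Sigma {1..M} (\<lambda>k. {1..M div k})"
      using b k by auto
  qed
  also have "\<dots> = (\<Sum>N\<in>{1..M}. \<Sum>k\<in>{k. k dvd N}. moebius k / real N ^ d)"
    by (rule sum.Sigma[symmetric]) auto
  also have "\<dots> = (\<Sum>N\<in>{1..M}. (if N = 1 then 1 else 0) / real N ^ d)"
    by (intro sum.cong refl) (simp add: sum_divide_distrib[symmetric] sum_moebius_divisors)
  also have "\<dots> = (\<Sum>N\<in>{1..M}. if N = 1 then 1 else 0)" by (intro sum.cong) auto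
  also have "\<dots> = 1" using M by (simp add: sum.delta)
  finally show ?thesis .
qed

lemma suminf_moebius_partial_zeta:
  assumes M: "M \<ge> 1"
  shows "(\<Sum>k. moebius k / real k ^ d * (\<Sum>n\<in>{1..M div k}. 1 / real n ^ d)) = 1"
proof -
  have "(\<Sum>k. moebius k / real k ^ d * (\<Sum>n\<in>{1..M div k}. 1 / real n ^ d))
          = (\<Sum>k\<in>{1..M}. moebius k / real k ^ d * (\<Sum>n\<in>{1..M div k}. 1 / real n ^ d))"
  proof (rule suminf_finite)
    fix k assume "k \<notin> {1..M}"
    then have "k = 0 \<or> M div k = 0" by auto
    then show "moebius k / real k ^ d * (\<Sum>n\<in>{1..M div k}. 1 / real n ^ d) = 0" by auto
  qed simp
  also have "\<dots> = 1" by (rule sum_moebius_partial_zeta[OF M])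
  finally show ?thesis .
qed

text \<open>Tannery's theorem lets one pass to the limit \<open>M \<rightarrow> \<infinity>\<close> in the identity above.\<close>
lemma moebius_series_times_zeta:
  assumes d: "d \<ge> 2"
  shows "moebius_series d 1 * zeta_nat d = 1"
proof -
  define Zp where "Zp = (\<lambda>M. \<Sum>n\<in>{1..M}. 1 / real n ^ d)"
  have Zge: "Zp M \<ge> 0" for M by (simp add: Zp_def sum_nonneg)
  define a where "a = (\<lambda>k M. moebius k / real k ^ d * Zp (M div k))"
  define b where "b = (\<lambda>k. moebius k / real k ^ d * zeta_nat d)"
  have T: "eventually (\<lambda>M. summable (\<lambda>k. norm (a k M))) sequentially \<and>
           summable (\<lambda>n. norm (b n)) \<and> ((\<lambda>M. suminf (\<lambda>k. a k M)) \<longlongrightarrow> suminf b) sequentially"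
  proof (rule tannerys_theorem[where M = "\<lambda>k. zeta_nat d * inverse (real k ^ d)"])
    show "((\<lambda>M. a k M) \<longlongrightarrow> b k) sequentially" for k
    proof (cases "k = 0")
      case False
      have "((\<lambda>M. Zp (M div k)) \<longlongrightarrow> zeta_nat d) sequentially"
        unfolding Zp_def using False
        by (intro filterlim_compose[OF zeta_nat_partial_sums(1)[OF d] filterlim_at_top_div_const_nat]) simp
      then show ?thesis unfolding a_def b_def by (intro tendsto_intros)
    qed (simp add: a_def b_def)
    show "eventually (\<lambda>(k, M). norm (a k M) \<le> zeta_nat d * inverse (real k ^ d)) (at_top \<times>\<^sub>F sequentially)"
    proof (rule always_eventually, clarify)
      fix k M
      have "norm (a k M) = \<bar>moebius k\<bar> * inverse (real k ^ d) * Zp (M div k)"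
        using Zge by (simp add: a_def abs_mult divide_inverse)
      also have "\<dots> \<le> 1 * inverse (real k ^ d) * zeta_nat d"
        using abs_moebius_le Zge zeta_nat_partial_sums(2)[OF d]
        by (intro mult_mono) (auto simp: Zp_def)
      finally show "norm (a k M) \<le> zeta_nat d * inverse (real k ^ d)" by (simp add: mult.commute)
    qed
    show "summable (\<lambda>k. zeta_nat d * inverse (real k ^ d))"
      by (intro summable_mult inverse_power_summable d)
  qed simp
  have "eventually (\<lambda>M. suminf (\<lambda>k. a k M) = 1) sequentially"
    using eventually_ge_at_top[of "1::nat"]
    by eventually_elim (unfold a_def Zp_def, rule suminf_moebius_partial_zeta)
  then have "((\<lambda>M. suminf (\<lambda>k. a k M)) \<longlongrightarrow> 1) sequentially" by (rule tendsto_eventually)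
  with T have "suminf b = 1" using LIMSEQ_unique by blast
  moreover have "suminf b = moebius_series d 1 * zeta_nat d"
    unfolding b_def moebius_series_def
    using suminf_mult2[OF summable_moebius_series[OF d, of 1], of "zeta_nat d"] by simp
  ultimately show ?thesis by simp
qed

section \<open>Moebius inversion over the visible points\<close>

definition coord_gcd :: "real^'n \<Rightarrow> int" where
  "coord_gcd x = Gcd (range (\<lambda>i. \<lfloor>x $ i\<rfloor>))"

lemma visible_points_eq: "visible_points = {x \<in> int_vecs. coord_gcd x = 1}"
  by (auto simp: visible_points_def int_vecs_def coord_gcd_def)

lemma dvd_coord_gcd_iff: "d dvd coord_gcd x \<longleftrightarrow> (\<forall>i. d dvd \<lfloor>x $ i\<rfloor>)"
  unfolding coord_gcd_def by (auto intro: Gcd_greatest dvd_trans[OF _ Gcd_dvd])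

lemma coord_gcd_bounds:
  fixes x :: "real^'n"
  assumes "x \<in> int_vecs" "x \<noteq> 0"
  shows "coord_gcd x > 0" "coord_gcd x \<le> norm x"
proof -
  obtain i where xi: "x $ i \<noteq> 0" using assms(2) by (auto simp: vec_eq_iff)
  have xint: "x $ i \<in> \<int>" using assms(1) by (simp add: int_vecs_def)
  then have fl: "of_int \<lfloor>x $ i\<rfloor> = x $ i" by simp
  then have fl0: "\<lfloor>x $ i\<rfloor> \<noteq> 0" using xi by auto
  have gd: "coord_gcd x dvd \<lfloor>x $ i\<rfloor>" using dvd_coord_gcd_iff[of "coord_gcd x" x] by simp
  have "coord_gcd x \<noteq> 0" using gd fl0 by auto
  moreover have "coord_gcd x \<ge> 0" by (simp add: coord_gcd_def)
  ultimately show gp: "coord_gcd x > 0" by simp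
  have "coord_gcd x \<le> \<bar>\<lfloor>x $ i\<rfloor>\<bar>" using dvd_imp_le_int[OF fl0 gd] gp by simp
  then have "real_of_int (coord_gcd x) \<le> \<bar>x $ i\<bar>" using fl by (metis of_int_abs of_int_le_iff)
  also have "\<bar>x $ i\<bar> \<le> norm x" by (rule component_le_norm_cart)
  finally show "coord_gcd x \<le> norm x" .
qed

lemma coord_gcd_0: "coord_gcd 0 = 0" by (simp add: coord_gcd_def)

lemma sum_moebius_dvd_coord_gcd:
  fixes x :: "real^'n"
  assumes x: "x \<in> int_vecs" "x \<noteq> 0" "norm x \<le> real N"
  shows "(\<Sum>m\<in>{1..N}. if (\<forall>i. int m dvd \<lfloor>x $ i\<rfloor>) then moebius m else 0) = (if coord_gcd x = 1 then 1 else 0)"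
proof -
  define g where "g = nat (coord_gcd x)"
  have gp: "coord_gcd x > 0" "coord_gcd x \<le> norm x" using coord_gcd_bounds[OF x(1,2)] by auto
  have g: "int g = coord_gcd x" "g > 0" using gp by (auto simp: g_def)
  have gN: "g \<le> N" using gp x(3) g(1) by (metis of_int_le_iff of_int_of_nat_eq of_nat_le_iff order.trans)
  have set: "{m\<in>{1..N}. \<forall>i. int m dvd \<lfloor>x $ i\<rfloor>} = {m. m dvd g}"
  proof (intro equalityI subsetI)
    fix m assume "m \<in> {m\<in>{1..N}. \<forall>i. int m dvd \<lfloor>x $ i\<rfloor>}"
    then have "int m dvd coord_gcd x" by (simp add: dvd_coord_gcd_iff)
    then show "m \<in> {m. m dvd g}" using g(1) by (metis int_dvd_int_iff mem_Collect_eq)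
  next
    fix m assume "m \<in> {m. m dvd g}"
    then have mg: "m dvd g" by simp
    then have "int m dvd coord_gcd x" using g(1) by (metis int_dvd_int_iff)
    moreover have "m \<ge> 1" "m \<le> N" using mg g(2) gN
      by (auto intro: order.trans[OF dvd_imp_le] simp: Suc_le_eq gr0I)
    ultimately show "m \<in> {m\<in>{1..N}. \<forall>i. int m dvd \<lfloor>x $ i\<rfloor>}" by (simp add: dvd_coord_gcd_iff)
  qed
  have "(\<Sum>m\<in>{1..N}. if (\<forall>i. int m dvd \<lfloor>x $ i\<rfloor>) then moebius m else 0)
      = (\<Sum>m\<in>{m\<in>{1..N}. \<forall>i. int m dvd \<lfloor>x $ i\<rfloor>}. moebius m)"
    by (rule sum.inter_filter[symmetric]) simp
  also have "\<dots> = (if g = 1 then 1 else 0)" unfolding set using g(2) by (rule sum_moebius_divisors)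
  also have "(g = 1) = (coord_gcd x = 1)" using g(1) by auto
  finally show ?thesis .
qed

lemma int_vecs_multiples_eq:
  fixes r :: real
  assumes m: "m \<ge> 1"
  shows "{x \<in> int_vecs \<inter> cball (0::real^'n) r - {0}. \<forall>i. int m dvd \<lfloor>x $ i\<rfloor>}
       = (\<lambda>z. real m *\<^sub>R z) ` (int_vecs \<inter> cball 0 (r / real m) - {0})"
proof (intro equalityI subsetI)
  fix x :: "real^'n" assume "x \<in> {x \<in> int_vecs \<inter> cball 0 r - {0}. \<forall>i. int m dvd \<lfloor>x $ i\<rfloor>}"
  then have x: "x \<in> int_vecs" "norm x \<le> r" "x \<noteq> 0" "\<And>i. int m dvd \<lfloor>x $ i\<rfloor>" by auto
  define z where "z = (1 / real m) *\<^sub>R x"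
  have mp: "real m > 0" using m by simp
  have xz: "x = real m *\<^sub>R z" using mp by (simp add: z_def)
  have "z \<in> int_vecs" unfolding int_vecs_def
  proof (intro CollectI allI)
    fix i
    obtain c where c: "\<lfloor>x $ i\<rfloor> = int m * c" using x(4)[of i] by (elim dvdE)
    have "x $ i = of_int \<lfloor>x $ i\<rfloor>" using x(1) by (simp add: int_vecs_def)
    then have "z $ i = of_int c" using c mp by (simp add: z_def)
    then show "z $ i \<in> \<int>" by simp
  qed
  moreover have "norm z \<le> r / real m" using x(2) mp by (simp add: z_def divide_right_mono)
  moreover have "z \<noteq> 0" using x(3) xz by auto
  ultimately show "x \<in> (\<lambda>z. real m *\<^sub>R z) ` (int_vecs \<inter> cball 0 (r / real m) - {0})"
    using xz by auto
next
  fix x :: "real^'n" assume "x \<in> (\<lambda>z. real m *\<^sub>R z) ` (int_vecs \<inter> cball 0 (r / real m) - {0})"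
  then obtain z where zin: "z \<in> int_vecs \<inter> cball 0 (r / real m) - {0}" and xz: "x = real m *\<^sub>R z" by blast
  then have z: "z \<in> int_vecs" "norm z \<le> r / real m" "z \<noteq> 0" by auto
  have mp: "real m > 0" using m by simp
  have "x \<in> int_vecs" using z(1) by (auto simp: xz int_vecs_def)
  moreover have "norm x \<le> r" using z(2) mp by (simp add: xz field_simps)
  moreover have "x \<noteq> 0" using z(3) mp by (simp add: xz)
  moreover have "int m dvd \<lfloor>x $ i\<rfloor>" for i
  proof -
    obtain c where c: "z $ i = of_int c" using z(1) by (auto simp: int_vecs_def elim!: Ints_cases)
    have "x $ i = of_int (int m * c)" by (simp add: xz c)
    then have "\<lfloor>x $ i\<rfloor> = int m * c" by (simp only: floor_of_int)
    then show ?thesis by simp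
  qed
  ultimately show "x \<in> {x \<in> int_vecs \<inter> cball 0 r - {0}. \<forall>i. int m dvd \<lfloor>x $ i\<rfloor>}" by auto
qed

lemma sum_visible_points_moebius:
  fixes f :: "real^'n \<Rightarrow> complex"
  assumes N: "r \<le> real N"
  shows "(\<Sum>x\<in>visible_points \<inter> cball 0 r. f x)
       = (\<Sum>m\<in>{1..N}. complex_of_real (moebius m) * (\<Sum>z\<in>int_vecs \<inter> cball 0 (r / real m) - {0}. f (real m *\<^sub>R z)))"
proof -
  define A where "A = int_vecs \<inter> cball (0::real^'n) r - {0}"
  have finA: "finite A" by (simp add: A_def finite_int_vecs_cball)
  have vis: "visible_points \<inter> cball 0 r = {x\<in>A. coord_gcd x = 1}"
    by (auto simp: A_def visible_points_eq coord_gcd_0)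
  have "(\<Sum>x\<in>visible_points \<inter> cball 0 r. f x) = (\<Sum>x\<in>A. if coord_gcd x = 1 then f x else 0)"
    unfolding vis by (rule sum.inter_filter[OF finA])
  also have "\<dots> = (\<Sum>x\<in>A. \<Sum>m\<in>{1..N}. if (\<forall>i. int m dvd \<lfloor>x $ i\<rfloor>) then complex_of_real (moebius m) * f x else 0)"
  proof (rule sum.cong[OF refl])
    fix x assume xA: "x \<in> A"
    then have x: "x \<in> int_vecs" "x \<noteq> 0" "norm x \<le> real N" using N by (auto simp: A_def)
    have "(if coord_gcd x = 1 then f x else 0)
        = complex_of_real (\<Sum>m\<in>{1..N}. if (\<forall>i. int m dvd \<lfloor>x $ i\<rfloor>) then moebius m else 0) * f x"
      by (simp only: sum_moebius_dvd_coord_gcd[OF x]) simp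
    also have "\<dots> = (\<Sum>m\<in>{1..N}. if (\<forall>i. int m dvd \<lfloor>x $ i\<rfloor>) then complex_of_real (moebius m) * f x else 0)"
      by (simp add: of_real_sum sum_distrib_right if_distrib if_distribR cong: if_cong)
    finally show "(if coord_gcd x = 1 then f x else 0) = \<dots>" .
  qed
  also have "\<dots> = (\<Sum>m\<in>{1..N}. \<Sum>x\<in>A. if (\<forall>i. int m dvd \<lfloor>x $ i\<rfloor>) then complex_of_real (moebius m) * f x else 0)"
    by (rule sum.swap)
  also have "\<dots> = (\<Sum>m\<in>{1..N}. complex_of_real (moebius m) * (\<Sum>z\<in>int_vecs \<inter> cball 0 (r / real m) - {0}. f (real m *\<^sub>R z)))"
  proof (rule sum.cong[OF refl])
    fix m assume "m \<in> {1..N}"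
    then have m: "m \<ge> 1" by simp
    have "(\<Sum>x\<in>A. if (\<forall>i. int m dvd \<lfloor>x $ i\<rfloor>) then complex_of_real (moebius m) * f x else 0)
        = (\<Sum>x\<in>{x\<in>A. \<forall>i. int m dvd \<lfloor>x $ i\<rfloor>}. complex_of_real (moebius m) * f x)"
      by (rule sum.inter_filter[OF finA, symmetric])
    also have "\<dots> = complex_of_real (moebius m) * (\<Sum>x\<in>{x\<in>A. \<forall>i. int m dvd \<lfloor>x $ i\<rfloor>}. f x)"
      by (simp add: sum_distrib_left)
    also have "(\<Sum>x\<in>{x\<in>A. \<forall>i. int m dvd \<lfloor>x $ i\<rfloor>}. f x) = (\<Sum>z\<in>int_vecs \<inter> cball 0 (r / real m) - {0}. f (real m *\<^sub>R z))"
      unfolding A_def int_vecs_multiples_eq[OF m] using m by (subst sum.reindex) (auto simp: inj_on_def)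
    finally show "(\<Sum>x\<in>A. if (\<forall>i. int m dvd \<lfloor>x $ i\<rfloor>) then complex_of_real (moebius m) * f x else 0)
      = complex_of_real (moebius m) * (\<Sum>z\<in>int_vecs \<inter> cball 0 (r / real m) - {0}. f (real m *\<^sub>R z))" .
  qed
  finally show ?thesis .
qed

lemma filterlim_divide_const_at_top: "(c::real) > 0 \<Longrightarrow> filterlim (\<lambda>r::real. r / c) at_top at_top"
proof -
  assume c: "c > 0"
  have "filterlim (\<lambda>r::real. inverse c * r) at_top at_top"
    by (rule filterlim_tendsto_pos_mult_at_top[OF tendsto_const]) (use c in \<open>auto intro: filterlim_ident\<close>)
  then show ?thesis by (simp add: divide_inverse mult.commute)
qed

definition dilated_exp_sum :: "real^'n \<Rightarrow> nat \<Rightarrow> real \<Rightarrow> complex" where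
  "dilated_exp_sum y m r = (\<Sum>z\<in>int_vecs \<inter> cball 0 (r / real m) - {0}. add_char ((real m *\<^sub>R z) \<bullet> y))"

lemma dilated_exp_sum_asymp:
  fixes y :: "real^'n"
  assumes m: "m \<ge> 1"
  shows "((\<lambda>r. dilated_exp_sum y m r / complex_of_real (ball_vol TYPE('n) r))
          \<longlongrightarrow> complex_of_real (1 / real m ^ CARD('n)) * (if real m *\<^sub>R y \<in> int_vecs then 1 else 0)) at_top"
proof -
  have mp: "real m > 0" using m by simp
  define c where "c = (if real m *\<^sub>R y \<in> int_vecs then 1 else (0::complex))"
  define g1 where "g1 = (\<lambda>s. (\<Sum>z\<in>int_vecs \<inter> cball (0::real^'n) s. add_char (z \<bullet> (real m *\<^sub>R y))) / complex_of_real (ball_vol TYPE('n) s))"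
  define g2 where "g2 = (\<lambda>s. complex_of_real (inverse (ball_vol TYPE('n) s)))"
  have l1: "(g1 \<longlongrightarrow> c) at_top" unfolding g1_def c_def by (rule int_vecs_exp_sum_asymp)
  have l1': "((\<lambda>r. g1 (r / real m)) \<longlongrightarrow> c) at_top" by (rule filterlim_compose[OF l1 filterlim_divide_const_at_top[OF mp]])
  have l2: "(g2 \<longlongrightarrow> complex_of_real 0) at_top" unfolding g2_def
    by (intro tendsto_of_real tendsto_inverse_0_at_top ball_vol_at_top)
  have l2': "((\<lambda>r. g2 (r / real m)) \<longlongrightarrow> 0) at_top" using filterlim_compose[OF l2 filterlim_divide_const_at_top[OF mp]] by simp
  have lim: "((\<lambda>r. complex_of_real (1 / real m ^ CARD('n)) * (g1 (r / real m) - g2 (r / real m)))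
      \<longlongrightarrow> complex_of_real (1 / real m ^ CARD('n)) * (c - 0)) at_top"
    by (intro tendsto_intros l1' l2')
  have ev: "eventually (\<lambda>r. complex_of_real (1 / real m ^ CARD('n)) * (g1 (r / real m) - g2 (r / real m))
      = dilated_exp_sum y m r / complex_of_real (ball_vol TYPE('n) r)) at_top"
    using eventually_gt_at_top[of 0]
  proof eventually_elim
    case (elim r)
    define s where "s = r / real m"
    have s: "s > 0" using elim mp by (simp add: s_def)
    have vs: "ball_vol TYPE('n) s > 0" using s by (rule ball_vol_pos)
    have vr: "ball_vol TYPE('n) r = real m ^ CARD('n) * ball_vol TYPE('n) s" unfolding s_def using mp by (rule ball_vol_scale)
    have z: "0 \<in> int_vecs \<inter> cball (0::real^'n) s" using s by (auto simp: int_vecs_def)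
    have "dilated_exp_sum y m r = (\<Sum>z\<in>int_vecs \<inter> cball (0::real^'n) s. add_char (z \<bullet> (real m *\<^sub>R y))) - 1"
      unfolding dilated_exp_sum_def s_def[symmetric] using z
      by (simp add: sum_diff1 finite_int_vecs_cball inner_scaleR_left inner_scaleR_right add_char_def)
    then show ?case
      using vs mp by (simp add: g1_def g2_def s_def[symmetric] vr field_simps)
  qed
  show ?thesis using tendsto_cong[OF ev] lim by (simp add: c_def)
qed

lemma norm_ge_1_if_int_vec: "z \<in> int_vecs \<Longrightarrow> z \<noteq> 0 \<Longrightarrow> norm (z::real^'n) \<ge> 1"
  using coord_gcd_bounds[of z] by (metis int_one_le_iff_zero_less of_int_1 of_int_le_iff order.trans)

lemma dilated_exp_sum_eq_0:
  fixes y :: "real^'n"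
  assumes rm: "r < real m"
  shows "dilated_exp_sum y m r = 0"
proof -
  have "int_vecs \<inter> cball (0::real^'n) (r / real m) - {0} = {}"
  proof (intro equalityI subsetI)
    fix z :: "real^'n" assume z: "z \<in> int_vecs \<inter> cball 0 (r / real m) - {0}"
    then have "norm z \<ge> 1" using norm_ge_1_if_int_vec by auto
    moreover have "r / real m < 1" using rm by (cases "m = 0") (auto simp: field_simps)
    ultimately show "z \<in> {}" using z by auto
  qed auto
  then show ?thesis unfolding dilated_exp_sum_def by (simp only: sum.empty)
qed

lemma norm_dilated_exp_sum_le:
  fixes y :: "real^'n"
  assumes r: "r > 0" and m: "m \<ge> 1"
  shows "norm (dilated_exp_sum y m r) \<le> (1 + real CARD('n)) ^ CARD('n) * ball_vol TYPE('n) r / real m ^ CARD('n)"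
proof -
  have mp: "real m > 0" using m by simp
  define s where "s = r / real m"
  have s0: "s > 0" using r mp by (simp add: s_def)
  have C0: "0 \<le> (1 + real CARD('n)) ^ CARD('n) * ball_vol TYPE('n) r / real m ^ CARD('n)"
    using ball_vol_pos[OF r, where 'n='n] by simp
  have "norm (dilated_exp_sum y m r) \<le> (\<Sum>z\<in>int_vecs \<inter> cball (0::real^'n) s - {0}. 1)"
    unfolding dilated_exp_sum_def s_def by (rule sum_norm_le) simp
  also have "\<dots> = real (card (int_vecs \<inter> cball (0::real^'n) s - {0}))" by simp
  finally have n1: "norm (dilated_exp_sum y m r) \<le> real (card (int_vecs \<inter> cball (0::real^'n) s - {0}))" .
  show ?thesis
  proof (cases "s < 1")
    case True
    then have "r < real m" using mp by (simp add: s_def field_simps)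
    then show ?thesis using C0 by (simp add: dilated_exp_sum_eq_0)
  next
    case False
    have "real (card (int_vecs \<inter> cball (0::real^'n) s - {0})) \<le> real (card (int_vecs \<inter> cball (0::real^'n) s))"
      by (intro of_nat_mono card_mono finite_int_vecs_cball) auto
    also have "\<dots> \<le> unit_ball_vol CARD('n) * (s + CARD('n)) ^ CARD('n)"
      by (rule card_int_vecs_cball_le) (use s0 in \<open>auto intro: finite_int_vecs_cball\<close>)
    also have "\<dots> \<le> unit_ball_vol CARD('n) * ((1 + CARD('n)) * s) ^ CARD('n)"
      using False s0 by (intro mult_left_mono power_mono) (auto simp: algebra_simps)
    also have "\<dots> = (1 + real CARD('n)) ^ CARD('n) * ball_vol TYPE('n) s"
      by (simp add: ball_vol_def power_mult_distrib)
    also have "ball_vol TYPE('n) s = ball_vol TYPE('n) r / real m ^ CARD('n)"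
      using ball_vol_scale[OF mp, of r, where 'n='n] mp by (simp add: s_def)
    finally show ?thesis using n1 by simp
  qed
qed

lemma visible_exp_sum_moebius_sums:
  fixes y :: "real^'n"
  shows "(\<lambda>m. complex_of_real (moebius m) * dilated_exp_sum y m r)
           sums (\<Sum>x\<in>visible_points \<inter> cball 0 r. add_char (x \<bullet> y))"
proof -
  define N where "N = nat \<lceil>r\<rceil>"
  have N: "r \<le> real N" unfolding N_def by (rule real_nat_ceiling_ge)
  have "(\<lambda>m. complex_of_real (moebius m) * dilated_exp_sum y m r)
          sums (\<Sum>m\<in>{1..N}. complex_of_real (moebius m) * dilated_exp_sum y m r)"
  proof (rule sums_finite)
    fix m assume "m \<notin> {1..N}"
    then have "m = 0 \<or> r < real m" using N by auto
    then show "complex_of_real (moebius m) * dilated_exp_sum y m r = 0"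
      by (auto simp: dilated_exp_sum_eq_0)
  qed simp
  also have "(\<Sum>m\<in>{1..N}. complex_of_real (moebius m) * dilated_exp_sum y m r)
               = (\<Sum>x\<in>visible_points \<inter> cball 0 r. add_char (x \<bullet> y))"
    unfolding dilated_exp_sum_def by (rule sum_visible_points_moebius[OF N, symmetric])
  finally show ?thesis .
qed

lemma norm_moebius_dilated_exp_sum_le:
  fixes y :: "real^'n"
  assumes r: "r > 0"
  shows "norm (complex_of_real (moebius m) * dilated_exp_sum y m r / complex_of_real (ball_vol TYPE('n) r))
           \<le> (1 + real CARD('n)) ^ CARD('n) * inverse (real m ^ CARD('n))"
proof (cases "m = 0")
  case False
  have v: "ball_vol TYPE('n) r > 0" using r by (rule ball_vol_pos)
  have "norm (complex_of_real (moebius m) * dilated_exp_sum y m r / complex_of_real (ball_vol TYPE('n) r))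
          = \<bar>moebius m\<bar> * norm (dilated_exp_sum y m r) / ball_vol TYPE('n) r"
    using v by (simp add: norm_mult norm_divide)
  also have "\<dots> \<le> 1 * ((1 + real CARD('n)) ^ CARD('n) * ball_vol TYPE('n) r / real m ^ CARD('n)) / ball_vol TYPE('n) r"
    using abs_moebius_le norm_dilated_exp_sum_le[OF r, of m y] False v
    by (intro divide_right_mono mult_mono) auto
  also have "\<dots> = (1 + real CARD('n)) ^ CARD('n) * inverse (real m ^ CARD('n))"
    using v by (simp add: field_simps)
  finally show ?thesis .
qed simp

lemma visible_exp_sum_asymp:
  fixes y :: "real^'n"
  assumes d: "CARD('n) \<ge> 2"
  shows "((\<lambda>r. (\<Sum>x\<in>visible_points \<inter> cball 0 r. add_char (x \<bullet> y)) / complex_of_real (ball_vol TYPE('n) r))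
     \<longlongrightarrow> (\<Sum>m. complex_of_real (moebius m / real m ^ CARD('n) * (if real m *\<^sub>R y \<in> int_vecs then 1 else 0)))) at_top"
proof -
  define a where "a = (\<lambda>m r. complex_of_real (moebius m) * dilated_exp_sum y m r / complex_of_real (ball_vol TYPE('n) r))"
  define b where "b = (\<lambda>m. complex_of_real (moebius m / real m ^ CARD('n) * (if real m *\<^sub>R y \<in> int_vecs then 1 else 0)))"
  have T: "eventually (\<lambda>r. summable (\<lambda>m. norm (a m r))) at_top \<and>
           summable (\<lambda>n. norm (b n)) \<and> ((\<lambda>r. suminf (\<lambda>m. a m r)) \<longlongrightarrow> suminf b) at_top"
  proof (rule tannerys_theorem[where M = "\<lambda>m. (1 + real CARD('n)) ^ CARD('n) * inverse (real m ^ CARD('n))"])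
    show "((\<lambda>r. a m r) \<longlongrightarrow> b m) at_top" for m
    proof (cases "m = 0")
      case False
      then have "((\<lambda>r. complex_of_real (moebius m) * (dilated_exp_sum y m r / complex_of_real (ball_vol TYPE('n) r)))
          \<longlongrightarrow> complex_of_real (moebius m) * (complex_of_real (1 / real m ^ CARD('n)) *
                (if real m *\<^sub>R y \<in> int_vecs then 1 else 0))) at_top"
        by (intro tendsto_mult_left dilated_exp_sum_asymp) simp
      then show ?thesis by (cases "real m *\<^sub>R y \<in> int_vecs") (simp_all add: a_def b_def)
    qed (simp add: a_def b_def)
    show "eventually (\<lambda>(m, r). norm (a m r) \<le> (1 + real CARD('n)) ^ CARD('n) * inverse (real m ^ CARD('n)))
            (at_top \<times>\<^sub>F at_top)"
      unfolding eventually_prod_filter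
      by (intro exI[of _ "\<lambda>_. True"] exI[of _ "\<lambda>r. r > 0"])
         (auto simp: a_def norm_moebius_dilated_exp_sum_le eventually_gt_at_top)
    show "summable (\<lambda>m. (1 + real CARD('n)) ^ CARD('n) * inverse (real m ^ CARD('n)))"
      by (intro summable_mult inverse_power_summable d)
  qed simp
  have "suminf (\<lambda>m. a m r)
          = (\<Sum>x\<in>visible_points \<inter> cball 0 r. add_char (x \<bullet> y)) / complex_of_real (ball_vol TYPE('n) r)" for r
    unfolding a_def using sums_divide[OF visible_exp_sum_moebius_sums] by (rule sums_unique[symmetric])
  then show ?thesis using T by (simp add: b_def)
qed

section \<open>The Fourier--Bohr coefficients of the visible points\<close>

lemma moebius_lattice_series_sums:
  fixes y :: "real^'n"
  assumes d: "d \<ge> 2" and y: "rat_vec y"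
  shows "(\<lambda>m. moebius m / real m ^ d * (if real m *\<^sub>R y \<in> int_vecs then 1 else 0))
           sums (1 / real (den y) ^ d * moebius_series d (den y))"
proof -
  define q where "q = den y"
  have q: "q = min_den y" "q > 0" using den_eq_min_den[OF y] min_den_pos[OF y] by (simp_all add: q_def)
  define g where "g = (\<lambda>m. moebius m / real m ^ d * (if real m *\<^sub>R y \<in> int_vecs then 1 else 0))"
  have g_eq: "g m = (if q dvd m then moebius m / real m ^ d else 0)" for m
    by (cases "m = 0") (simp_all add: g_def q dilate_in_int_vecs_iff clears_den_iff_min_den_dvd[OF y])
  have "(\<lambda>k. g (q * k)) = (\<lambda>k. (1 / real q ^ d) * (moebius (q * k) / real k ^ d))"
    by (rule ext) (simp add: g_eq power_mult_distrib)
  moreover have "\<dots> sums ((1 / real q ^ d) * moebius_series d q)"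
    unfolding moebius_series_def by (intro sums_mult summable_sums summable_moebius_series d)
  ultimately have "(\<lambda>k. g (q * k)) sums ((1 / real q ^ d) * moebius_series d q)" by simp
  then have "g sums ((1 / real q ^ d) * moebius_series d q)"
    by (subst (asm) sums_mono_reindex) (auto simp: strict_mono_def q(2) g_eq)
  then show ?thesis by (simp add: g_def q_def)
qed

lemma moebius_lattice_series_eq:
  fixes y :: "real^'n"
  assumes d: "CARD('n) \<ge> 2"
  shows "(\<Sum>m. complex_of_real (moebius m / real m ^ CARD('n) * (if real m *\<^sub>R y \<in> int_vecs then 1 else 0)))
       = (if y \<in> L_star then complex_of_real (1 / zeta_nat CARD('n)
                         * (\<Prod>p\<in>prime_factors (den y). 1 / (1 - real p ^ CARD('n)))) else 0)"
proof -
  define V where "V = (if y \<in> L_star then 1 / zeta_nat CARD('n)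
                         * (\<Prod>p\<in>prime_factors (den y). 1 / (1 - real p ^ CARD('n))) else 0)"
  have "(\<lambda>m. moebius m / real m ^ CARD('n) * (if real m *\<^sub>R y \<in> int_vecs then 1 else 0)) sums V"
  proof (cases "rat_vec y")
    case False
    then have "real m *\<^sub>R y \<notin> int_vecs" if "m > 0" for m
      using that rat_vec_if_clears_den by (auto simp: dilate_in_int_vecs_iff)
    then have "(\<lambda>m. moebius m / real m ^ CARD('n) * (if real m *\<^sub>R y \<in> int_vecs then 1 else 0)) = (\<lambda>_. 0)"
      by (auto intro!: ext)
    moreover have "V = 0" using False by (simp add: V_def L_star_def)
    ultimately show ?thesis by simp
  next
    case True
    note sums = moebius_lattice_series_sums[OF d True]
    show ?thesis
    proof (cases "squarefree (den y)")
      case sq: True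
      have "moebius_series CARD('n) 1 = 1 / zeta_nat CARD('n)"
        using moebius_series_times_zeta[OF d] zeta_nat_pos[OF d] by (simp add: field_simps)
      then show ?thesis
        using sums moebius_series_squarefree[OF d sq] True sq by (simp add: V_def L_star_def)
    next
      case False
      then show ?thesis using sums by (simp add: V_def L_star_def moebius_series_not_squarefree)
    qed
  qed
  then have "(\<lambda>m. complex_of_real (moebius m / real m ^ CARD('n) * (if real m *\<^sub>R y \<in> int_vecs then 1 else 0)))
               sums complex_of_real V" by (rule sums_of_real)
  then show ?thesis by (simp add: sums_iff V_def)
qed

lemma visible_fourier_bohr_coeff:
  fixes y :: "real^'n"
  assumes d: "CARD('n) \<ge> 2"
  shows "((\<lambda>r. (\<Sum>x\<in>visible_points \<inter> cball 0 r. add_char (x \<bullet> y)) / complex_of_real (ball_vol TYPE('n) r))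
     \<longlongrightarrow> (if y \<in> L_star then complex_of_real (1 / zeta_nat CARD('n)
                         * (\<Prod>p\<in>prime_factors (den y). 1 / (1 - real p ^ CARD('n)))) else 0)) at_top"
  using visible_exp_sum_asymp[OF d, of y] by (simp only: moebius_lattice_series_eq[OF d])

theorem theorem2p3:
  assumes "CARD('n) \<ge> 2"
  shows "(\<forall>y :: real ^ 'n.
           ((\<lambda>r. (\<Sum>x\<in>visible_points \<inter> cball 0 r.
                    exp (- (2 * complex_of_real pi * \<i> * complex_of_real (x \<bullet> y))))
                  / complex_of_real (measure lebesgue (cball (0 :: real ^ 'n) r)))
             \<longlongrightarrow> (if y \<in> L_star
                  then complex_of_real (1 / zeta_nat CARD('n)
                         * (\<Prod>p\<in>prime_factors (den y). 1 / (1 - real p ^ CARD('n))))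
                  else 0)) at_top)
         \<and> ((\<lambda>r. real (card (visible_points \<inter> cball (0 :: real ^ 'n) r))
                / measure lebesgue (cball (0 :: real ^ 'n) r))
           \<longlongrightarrow> 1 / zeta_nat CARD('n)) at_top"
proof -
  have vol: "eventually (\<lambda>r. measure lebesgue (cball (0::real^'n) r) = ball_vol TYPE('n) r) at_top"
    using eventually_ge_at_top[of 0] by eventually_elim (rule measure_cball_eq_ball_vol)
  have coeff: "((\<lambda>r. (\<Sum>x\<in>visible_points \<inter> cball 0 r. add_char (x \<bullet> y))
                  / complex_of_real (measure lebesgue (cball (0 :: real ^ 'n) r)))
             \<longlongrightarrow> (if y \<in> L_star then complex_of_real (1 / zeta_nat CARD('n)
                         * (\<Prod>p\<in>prime_factors (den y). 1 / (1 - real p ^ CARD('n)))) else 0)) at_top"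
    for y :: "real^'n"
    using visible_fourier_bohr_coeff[OF assms, of y] by (rule tendsto_cong[THEN iffD1, rotated])
      (use vol in \<open>eventually_elim, simp\<close>)
  have "0 \<in> (L_star :: (real^'n) set)" by (simp add: L_star_def rat_vec_def den_0)
  then have "((\<lambda>r. Re ((\<Sum>x\<in>visible_points \<inter> cball 0 r. add_char (x \<bullet> (0::real^'n)))
                  / complex_of_real (measure lebesgue (cball (0 :: real ^ 'n) r))))
        \<longlongrightarrow> Re (complex_of_real (1 / zeta_nat CARD('n)))) at_top"
    using tendsto_Re[OF coeff[of 0]] by (simp add: den_0)
  then have "((\<lambda>r. real (card (visible_points \<inter> cball (0 :: real ^ 'n) r))
                / measure lebesgue (cball (0 :: real ^ 'n) r)) \<longlongrightarrow> 1 / zeta_nat CARD('n)) at_top"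
    by (simp add: Re_divide_of_real add_char_def)
  with coeff show ?thesis by (simp add: add_char_def)
qed

end
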